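(* Let $T\in\mathcal{GT}_k(n)$, $k\ge1$, and $i\in\{1,\dots,n\}$. Then $f_i\,\omega(T)$ is defined if and only if $i=q_j(T)$ for some $1\le j\le k$.
   Context: Type $C$ setting: $C_n=\{1<\cdots<n<\overline n<\cdots<\overline1\}$ with crystal graph $1\xrightarrow{1}2\xrightarrow{2}\cdots\xrightarrow{n-1}n\xrightarrow{n}\overline n\xrightarrow{n-1}\cdots\xrightarrow{1}\overline1$; Kashiwara operators act on $C_n^*$ by the tensor product rule. A column is a strictly increasing word; $N_z(u)$ counts letters $x\le z$ or $x\ge\overline z$; admissible columns are nonempty columns with $N_z(u)\le z$ for all $z$. $\mathrm{ACol}(C_n)$ is the set of admissible columns plus $\epsilon$; $p$ erases $\epsilon$; $f_iw$ is defined for $w\in\mathrm{ACol}(C_n)^*$ iff $f_ip(w)$ is defined. Blocks: $\mathfrak{c}(m)=12\cdots m$; $\mathfrak{c}(a,b)=(a+1)\cdots(a+b)$; $\mathfrak{c}(\overline a,c)=\overline a\cdots\overline{a-c+1}$ (empty when $b=0$ resp. $c=0$). $C$-trees: vertices $i$ ($i\ge1$), $im$, $im^-$ ($i,m\ge1$); $i$ has level $i$, $im,im^-$ level $i+m$; strand $i$ ordered $i<i1<i1^-<i2<\cdots$. A labelling of rank $k$ is $s$ from vertices of level $\le k$ to $\mathbb N$; valuation $q(v)=s(i)+\sum_{im\le v}s(im)-\sum_{im^-\le v}s(im^-)$ for $v$ on strand $i$; $n$-labelling if $0\le q\le n$. $\rho(i)=\mathfrak{c}(s(i))$; $\rho(im)=\mathfrak{c}(q(v'),s(im))$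 with $v'$ the predecessor of $im$ on its strand; $\rho(im^-)=\mathfrak{c}(\overline{q(im)},s(im^-))$. $\omega_t=\rho(t)\rho((t-1)1)\cdots\rho(1(t-1))\rho(1(t-1)^-)\cdots\rho((t-1)1^-)$, or $\epsilon$ if empty. $\mathcal{GT}_k(n)$: $n$-labellings of rank $k$ with each $\omega_t$ equal to $\epsilon$ or an admissible column; $\omega(T)=\omega_1\cdots\omega_k$. $q_j(T)=q(j(k-j)^-)$ for $1\le j\le k-1$ and $q_k(T)=s(k)$. *)

theory Defs
  imports Main
begin

text \<open>Letters of C_n are encoded as integers: the letter j (1 \<le> j \<le> n) is the
  integer j, the barred letter (overline j) is the integer -j.\<close>

definition letterC :: "nat \<Rightarrow> int \<Rightarrow> bool" where
  "letterC n x \<longleftrightarrow> (1 \<le> x \<and> x \<le> int n) \<or> (- int n \<le> x \<and> x \<le> -1)"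

text \<open>Position of a letter in the total order 1 < ... < n < bar n < ... < bar 1.\<close>
definition cidx :: "nat \<Rightarrow> int \<Rightarrow> int" where
  "cidx n x = (if x > 0 then x else 2 * int n + 1 + x)"

definition cless :: "nat \<Rightarrow> int \<Rightarrow> int \<Rightarrow> bool" where
  "cless n x y \<longleftrightarrow> cidx n x < cidx n y"

text \<open>Letters on which f_i acts (they contribute a + to the i-signature) and letters
  on which e_i acts (they contribute a -).\<close>
definition fplus :: "nat \<Rightarrow> nat \<Rightarrow> int \<Rightarrow> bool" where
  "fplus n i x \<longleftrightarrow> x = int i \<or> (i < n \<and> x = - (int i + 1))"

definition eminus :: "nat \<Rightarrow> nat \<Rightarrow> int \<Rightarrow> bool" where
  "eminus n i x \<longleftrightarrow> (i < n \<and> x = int i + 1) \<or> x = - int i"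

text \<open>Action of f_i on a single letter (only used on letters with fplus).\<close>
definition fletter :: "nat \<Rightarrow> nat \<Rightarrow> int \<Rightarrow> int" where
  "fletter n i x = (if i < n then x + 1 else - x)"

text \<open>Scan the word left to right; the stack holds the positions of the still unmatched
  + letters; a - letter cancels the nearest unmatched + to its left (cancellation of
  factors +-).  The result is the list of positions of the unmatched + letters
  (most recent first).\<close>
fun unmatched_plus :: "nat \<Rightarrow> nat \<Rightarrow> nat list \<Rightarrow> nat \<Rightarrow> int list \<Rightarrow> nat list" where
  "unmatched_plus n i st p [] = st"
| "unmatched_plus n i st p (x # xs) =
     (if fplus n i x then unmatched_plus n i (p # st) (Suc p) xs
      else if eminus n i x then unmatched_plus n i (drop 1 st) (Suc p) xs
      else unmatched_plus n i st (Suc p) xs)"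

text \<open>f_i acts on the leftmost unmatched +; it is undefined (None) if there is none.\<close>
definition fC :: "nat \<Rightarrow> nat \<Rightarrow> int list \<Rightarrow> int list option" where
  "fC n i w = (case unmatched_plus n i [] 0 w of
       [] \<Rightarrow> None
     | st \<Rightarrow> Some (w[last st := fletter n i (w ! last st)]))"

definition column :: "nat \<Rightarrow> int list \<Rightarrow> bool" where
  "column n u \<longleftrightarrow> (\<forall>x\<in>set u. letterC n x) \<and> sorted_wrt (cless n) u"

definition Ncount :: "nat \<Rightarrow> int list \<Rightarrow> nat" where
  "Ncount z u = length (filter (\<lambda>x. (0 < x \<and> x \<le> int z) \<or> (x < 0 \<and> - x \<le> int z)) u)"

definition admissible :: "nat \<Rightarrow> int list \<Rightarrow> bool" where
  "admissible n u \<longleftrightarrow> u \<noteq> [] \<and> column n u \<and> (\<forall>z\<in>{1..n}. Ncount z u \<le> z)"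

datatype acol = Eps | Col "int list"

definition pACol :: "acol list \<Rightarrow> int list" where
  "pACol ws = concat (map (\<lambda>c. case c of Eps \<Rightarrow> [] | Col u \<Rightarrow> u) ws)"

definition fACol_defined :: "nat \<Rightarrow> nat \<Rightarrow> acol list \<Rightarrow> bool" where
  "fACol_defined n i ws \<longleftrightarrow> fC n i (pACol ws) \<noteq> None"

definition cblock :: "nat \<Rightarrow> int list" where
  "cblock m = map int [1..<m+1]"

definition cblock2 :: "int \<Rightarrow> nat \<Rightarrow> int list" where
  "cblock2 a b = map (\<lambda>j. a + int j) [1..<b+1]"

definition cbar :: "int \<Rightarrow> nat \<Rightarrow> int list" where
  "cbar a c = map (\<lambda>j. - (a - int j)) [0..<c]"

text \<open>Vertices: Rt i = i, Pl i m = im, Mi i m = im^-.\<close>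
datatype vtx = Rt nat | Pl nat nat | Mi nat nat

fun valid_vtx :: "vtx \<Rightarrow> bool" where
  "valid_vtx (Rt i) = (1 \<le> i)"
| "valid_vtx (Pl i m) = (1 \<le> i \<and> 1 \<le> m)"
| "valid_vtx (Mi i m) = (1 \<le> i \<and> 1 \<le> m)"

fun level :: "vtx \<Rightarrow> nat" where
  "level (Rt i) = i"
| "level (Pl i m) = i + m"
| "level (Mi i m) = i + m"

text \<open>A labelling s of rank k is represented by a total function; only its values on
  the valid vertices of level \<le> k are ever used.  Valuation q(v):\<close>
fun qv :: "(vtx \<Rightarrow> nat) \<Rightarrow> vtx \<Rightarrow> int" where
  "qv s (Rt i) = int (s (Rt i))"
| "qv s (Pl i m) = int (s (Rt i)) + (\<Sum>m'\<in>{1..m}. int (s (Pl i m')))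
                                  - (\<Sum>m'\<in>{1..<m}. int (s (Mi i m')))"
| "qv s (Mi i m) = int (s (Rt i)) + (\<Sum>m'\<in>{1..m}. int (s (Pl i m')))
                                  - (\<Sum>m'\<in>{1..m}. int (s (Mi i m')))"

definition n_labelling :: "nat \<Rightarrow> nat \<Rightarrow> (vtx \<Rightarrow> nat) \<Rightarrow> bool" where
  "n_labelling n k s \<longleftrightarrow>
     (\<forall>v. valid_vtx v \<and> level v \<le> k \<longrightarrow> 0 \<le> qv s v \<and> qv s v \<le> int n)"

fun rho :: "(vtx \<Rightarrow> nat) \<Rightarrow> vtx \<Rightarrow> int list" where
  "rho s (Rt i) = cblock (s (Rt i))"
| "rho s (Pl i m) = cblock2 (qv s (if m = 1 then Rt i else Mi i (m - 1))) (s (Pl i m))"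
| "rho s (Mi i m) = cbar (qv s (Pl i m)) (s (Mi i m))"

definition omega_word :: "(vtx \<Rightarrow> nat) \<Rightarrow> nat \<Rightarrow> int list" where
  "omega_word s t = rho s (Rt t)
      @ concat (map (\<lambda>j. rho s (Pl j (t - j))) (rev [1..<t]))
      @ concat (map (\<lambda>j. rho s (Mi j (t - j))) [1..<t])"

definition omega_t :: "(vtx \<Rightarrow> nat) \<Rightarrow> nat \<Rightarrow> acol" where
  "omega_t s t = (if omega_word s t = [] then Eps else Col (omega_word s t))"

definition GT :: "nat \<Rightarrow> nat \<Rightarrow> (vtx \<Rightarrow> nat) set" where
  "GT k n = {s. n_labelling n k s \<and>
              (\<forall>t\<in>{1..k}. omega_word s t = [] \<or> admissible n (omega_word s t))}"

definition omega :: "nat \<Rightarrow> (vtx \<Rightarrow> nat) \<Rightarrow> acol list" where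
  "omega k s = map (omega_t s) [1..<k+1]"

definition qj :: "nat \<Rightarrow> (vtx \<Rightarrow> nat) \<Rightarrow> nat \<Rightarrow> int" where
  "qj k s j = (if j = k then int (s (Rt k)) else qv s (Mi j (k - j)))"

end

theory Submission
  imports Defs
begin

text \<open>Reading the columns of \<open>\<omega>(T)\<close> from left to right, the unmatched \<open>i\<close>-pluses
  are carried along the strands of the \<open>C\<close>-tree: a block running from value \<open>a\<close> to value
  \<open>b\<close> cancels the plus recorded at \<open>a = i\<close> and creates one at \<open>b = i\<close>.  Hence after
  \<open>\<omega>\<^sub>1 \<cdots> \<omega>\<^sub>t\<close> the number of unmatched \<open>i\<close>-pluses is the number of strands whose
  valuation at level \<open>t\<close> equals \<open>i\<close>, and \<open>f\<^sub>i\<close> is defined exactly when this number is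
  positive at level \<open>k\<close>.\<close>

fun unmatched_count :: "nat \<Rightarrow> nat \<Rightarrow> nat \<Rightarrow> int list \<Rightarrow> nat" where
  "unmatched_count n i l [] = l"
| "unmatched_count n i l (x # xs) =
     unmatched_count n i (if fplus n i x then Suc l else if eminus n i x then l - 1 else l) xs"

lemma unmatched_count_append:
  "unmatched_count n i l (xs @ ys) = unmatched_count n i (unmatched_count n i l xs) ys"
  by (induction xs arbitrary: l) auto

lemma length_unmatched_plus:
  "length (unmatched_plus n i st p w) = unmatched_count n i (length st) w"
  by (induction w arbitrary: st p) auto

lemma fC_defined_iff: "fC n i w \<noteq> None \<longleftrightarrow> 0 < unmatched_count n i 0 w"
  using length_unmatched_plus[of n i "[]" 0 w]
  by (auto simp: fC_def split: list.splits)

definition transfers :: "nat \<Rightarrow> nat \<Rightarrow> int \<Rightarrow> int \<Rightarrow> int list \<Rightarrow> bool" where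
  "transfers n i a b w \<longleftrightarrow>
     (\<forall>l. of_bool (a = int i) \<le> l \<longrightarrow>
        unmatched_count n i l w = l - of_bool (a = int i) + of_bool (b = int i))"

lemma transfers_Nil: "transfers n i a a []"
  by (simp add: transfers_def)

lemma transfers_append:
  assumes "transfers n i a b u" and "transfers n i b c v"
  shows "transfers n i a c (u @ v)"
  using assms by (simp add: transfers_def unmatched_count_append)

lemma transfers_letter_up:
  assumes "0 \<le> x" and "x < int n"
  shows "transfers n i x (x + 1) [x + 1]"
  using assms by (auto simp: transfers_def fplus_def eminus_def)

lemma transfers_letter_down:
  assumes "1 \<le> y" and "y \<le> int n"
  shows "transfers n i y (y - 1) [- y]"
  using assms by (auto simp: transfers_def fplus_def eminus_def)

lemma transfers_cblock2:
  assumes "0 \<le> x" and "x + int b \<le> int n"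
  shows "transfers n i x (x + int b) (cblock2 x b)"
  using assms
proof (induction b)
  case 0
  show ?case by (simp add: cblock2_def transfers_Nil)
next
  case (Suc b)
  have "cblock2 x (Suc b) = cblock2 x b @ [x + int b + 1]"
    by (simp add: cblock2_def)
  moreover have "transfers n i (x + int b) (x + int (Suc b)) [x + int b + 1]"
    using transfers_letter_up[of "x + int b" n i] Suc.prems by (simp add: ac_simps)
  ultimately show ?case
    using Suc transfers_append by auto
qed

lemma transfers_cbar:
  assumes "y \<le> int n" and "0 \<le> y - int c"
  shows "transfers n i y (y - int c) (cbar y c)"
  using assms
proof (induction c)
  case 0
  show ?case by (simp add: cbar_def transfers_Nil)
next
  case (Suc c)
  have "cbar y (Suc c) = cbar y c @ [- (y - int c)]"
    by (simp add: cbar_def)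
  moreover have "transfers n i (y - int c) (y - int (Suc c)) [- (y - int c)]"
    using transfers_letter_down[of "y - int c" n i] Suc.prems by (simp add: algebra_simps)
  ultimately show ?case
    using Suc transfers_append by auto
qed

text \<open>Transfers along different strands do not interact, so their effects add up.\<close>

lemma unmatched_count_concat_transfers:
  assumes "\<forall>j\<in>set js. transfers n i (a j) (b j) (w j)"
  shows "unmatched_count n i (c + length (filter (\<lambda>j. a j = int i) js)) (concat (map w js))
           = c + length (filter (\<lambda>j. b j = int i) js)"
  using assms
proof (induction js arbitrary: c)
  case Nil
  then show ?case by simp
next
  case (Cons j js)
  let ?A = "length (filter (\<lambda>j. a j = int i) js)"
  have start: "c + length (filter (\<lambda>j. a j = int i) (j # js)) = c + ?A + of_bool (a j = int i)"
    by simp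
  have step: "unmatched_count n i (c + ?A + of_bool (a j = int i)) (w j)
          = (c + of_bool (b j = int i)) + ?A"
    using Cons.prems by (simp add: transfers_def)
  have "unmatched_count n i (c + length (filter (\<lambda>j. a j = int i) (j # js))) (concat (map w (j # js)))
          = unmatched_count n i ((c + of_bool (b j = int i)) + ?A) (concat (map w js))"
    unfolding start by (simp only: concat.simps list.map unmatched_count_append step)
  also have "\<dots> = c + length (filter (\<lambda>j. b j = int i) (j # js))"
    using Cons by simp
  finally show ?case .
qed

lemma qv_Pl:
  assumes "1 \<le> m"
  shows "qv s (Pl j m) = qv s (if m = 1 then Rt j else Mi j (m - 1)) + int (s (Pl j m))"
proof -
  obtain m' where "m = Suc m'" using assms by (cases m) auto
  then show ?thesis
    by (cases "m' = 0") (simp_all add: sum.cl_ivl_Suc atLeastLessThanSuc_atLeastAtMost)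
qed

lemma qv_Mi:
  assumes "1 \<le> m"
  shows "qv s (Mi j m) = qv s (Pl j m) - int (s (Mi j m))"
proof -
  obtain m' where "m = Suc m'" using assms by (cases m) auto
  then show ?thesis by (simp add: sum.cl_ivl_Suc atLeastLessThanSuc_atLeastAtMost)
qed

definition strand_end :: "nat \<Rightarrow> nat \<Rightarrow> vtx" where
  "strand_end t j = (if j = t then Rt t else Mi j (t - j))"

definition level_count :: "(vtx \<Rightarrow> nat) \<Rightarrow> nat \<Rightarrow> nat \<Rightarrow> nat" where
  "level_count T i t = length (filter (\<lambda>j. qv T (strand_end t j) = int i) [1..<t+1])"

lemma strand_end_pred:
  assumes "j < t"
  shows "(if t - j = 1 then Rt j else Mi j (t - j - 1)) = strand_end (t - 1) j"
  using assms by (auto simp: strand_end_def)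

lemma qj_eq_strand_end: "qj k T j = qv T (strand_end k j)"
  by (simp add: qj_def strand_end_def)

lemma n_labelling_bounds:
  assumes "n_labelling n k T" and "valid_vtx v" and "level v \<le> k"
  shows "0 \<le> qv T v" and "qv T v \<le> int n"
  using assms unfolding n_labelling_def by auto

lemma omega_word_step:
  assumes lab: "n_labelling n k T" and t: "1 \<le> t" "t \<le> k" and i: "1 \<le> i"
  shows "unmatched_count n i (level_count T i (t - 1)) (omega_word T t) = level_count T i t"
proof -
  let ?start = "\<lambda>j. qv T (strand_end (t - 1) j)"
  let ?mid = "\<lambda>j. qv T (Pl j (t - j))"
  let ?end = "\<lambda>j. qv T (Mi j (t - j))"
  let ?c = "of_bool (int (T (Rt t)) = int i) :: nat"
  have before: "level_count T i (t - 1) = length (filter (\<lambda>j. ?start j = int i) (rev [1..<t]))"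
    using t by (simp add: level_count_def rev_filter[symmetric])
  have "transfers n i 0 (int (T (Rt t))) (rho T (Rt t))"
    using transfers_cblock2[of 0 "T (Rt t)" n i] n_labelling_bounds(2)[OF lab, of "Rt t"] t
    by (simp add: cblock_def cblock2_def)
  then have root: "unmatched_count n i (level_count T i (t - 1)) (rho T (Rt t))
                     = ?c + length (filter (\<lambda>j. ?start j = int i) (rev [1..<t]))"
    using i unfolding before transfers_def by simp
  have ascend: "\<forall>j\<in>set (rev [1..<t]). transfers n i (?start j) (?mid j) (rho T (Pl j (t - j)))"
  proof
    fix j assume "j \<in> set (rev [1..<t])"
    then have j: "1 \<le> j" "j < t" by auto
    have "0 \<le> ?start j"
      using n_labelling_bounds(1)[OF lab, of "strand_end (t - 1) j"] j t
      by (auto simp: strand_end_def)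
    moreover have "?mid j \<le> int n"
      using n_labelling_bounds(2)[OF lab, of "Pl j (t - j)"] j t by simp
    ultimately show "transfers n i (?start j) (?mid j) (rho T (Pl j (t - j)))"
      using transfers_cblock2[of "?start j" "T (Pl j (t - j))" n i]
        qv_Pl[of "t - j" T j] strand_end_pred[OF j(2)] j by simp
  qed
  have descend: "\<forall>j\<in>set [1..<t]. transfers n i (?mid j) (?end j) (rho T (Mi j (t - j)))"
  proof
    fix j assume "j \<in> set [1..<t]"
    then have j: "1 \<le> j" "j < t" by auto
    have "?mid j \<le> int n"
      using n_labelling_bounds(2)[OF lab, of "Pl j (t - j)"] j t by simp
    moreover have "0 \<le> ?end j"
      using n_labelling_bounds(1)[OF lab, of "Mi j (t - j)"] j t by simp
    moreover have "?end j = ?mid j - int (T (Mi j (t - j)))"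
      by (rule qv_Mi) (use j in simp)
    ultimately show "transfers n i (?mid j) (?end j) (rho T (Mi j (t - j)))"
      using transfers_cbar[of "?mid j" n "T (Mi j (t - j))" i] by (simp del: qv.simps)
  qed
  have rev_count: "length (filter P (rev [1..<t])) = length (filter P [1..<t])" for P
    by (simp add: rev_filter[symmetric])
  have "filter (\<lambda>j. qv T (strand_end t j) = int i) [1..<t] = filter (\<lambda>j. ?end j = int i) [1..<t]"
    by (rule filter_cong) (auto simp: strand_end_def simp del: qv.simps)
  then have after: "level_count T i t = ?c + length (filter (\<lambda>j. ?end j = int i) [1..<t])"
    using t by (simp del: qv.simps add: level_count_def strand_end_def qv.simps(1))
  have "unmatched_count n i (level_count T i (t - 1)) (omega_word T t)
      = unmatched_count n i
          (unmatched_count n i (?c + length (filter (\<lambda>j. ?start j = int i) (rev [1..<t])))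
             (concat (map (\<lambda>j. rho T (Pl j (t - j))) (rev [1..<t]))))
          (concat (map (\<lambda>j. rho T (Mi j (t - j))) [1..<t]))"
    unfolding omega_word_def unmatched_count_append root ..
  also have "\<dots> = unmatched_count n i (?c + length (filter (\<lambda>j. ?mid j = int i) [1..<t]))
                     (concat (map (\<lambda>j. rho T (Mi j (t - j))) [1..<t]))"
    by (subst unmatched_count_concat_transfers[OF ascend]) (simp only: rev_count)
  also have "\<dots> = level_count T i t"
    unfolding unmatched_count_concat_transfers[OF descend] after ..
  finally show ?thesis .
qed

lemma unmatched_count_omega_prefix:
  assumes lab: "n_labelling n k T" and "t \<le> k" and "1 \<le> i"
  shows "unmatched_count n i 0 (concat (map (omega_word T) [1..<t+1])) = level_count T i t"
  using assms(2)
proof (induction t)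
  case 0
  show ?case by (simp add: level_count_def)
next
  case (Suc t)
  then show ?case
    using omega_word_step[OF lab, of "Suc t" i] assms(3) by (simp add: unmatched_count_append)
qed

lemma pACol_omega: "pACol (omega k T) = concat (map (omega_word T) [1..<k+1])"
proof -
  have "(\<lambda>c. case c of Eps \<Rightarrow> [] | Col u \<Rightarrow> u) \<circ> omega_t T = omega_word T"
    by (rule ext) (simp add: omega_t_def)
  then show ?thesis unfolding pACol_def omega_def by simp
qed

theorem corollary5p6:
  fixes k n i :: nat and T :: "vtx \<Rightarrow> nat"
  assumes "T \<in> GT k n" and "1 \<le> k" and "i \<in> {1..n}"
  shows "fACol_defined n i (omega k T) \<longleftrightarrow> (\<exists>j\<in>{1..k}. int i = qj k T j)"
proof -
  have lab: "n_labelling n k T" using assms(1) by (simp add: GT_def)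
  have i: "1 \<le> i" using assms(3) by simp
  have "fACol_defined n i (omega k T) \<longleftrightarrow> 0 < level_count T i k"
    unfolding fACol_defined_def fC_defined_iff pACol_omega
      unmatched_count_omega_prefix[OF lab order_refl i] ..
  also have "\<dots> \<longleftrightarrow> (\<exists>j\<in>{1..k}. qv T (strand_end k j) = int i)"
    unfolding level_count_def length_greater_0_conv filter_empty_conv
    by (auto simp del: qv.simps)
  also have "\<dots> \<longleftrightarrow> (\<exists>j\<in>{1..k}. int i = qj k T j)"
    unfolding qj_eq_strand_end by metis
  finally show ?thesis .
qed

end
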